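(* For every choice of parameters, the Data Revocation Game has at least one pure-strategy Nash equilibrium. Moreover, there exist parameter choices for which it has more than one pure-strategy Nash equilibrium.
   Context: Data Revocation Game: a finite set of users $\mathcal I=\{1,\dots,I\}$, $I\ge 2$. Each user $i$ has parameters $d_i^{\max}>0$, $\epsilon_i>0$, $\xi_i>0$, $\ell_i>0$, $\theta_i\ge 0$. Each user chooses $d_i\in[0,d_i^{\max}]$. Payoff $$U_i(d_i,\boldsymbol{d_{-i}})=\ln\Big(\sum_{j\in\mathcal I}d_j+\epsilon_i\Big)-\xi_i d_i\ell_i-\theta_i d_i\sum_{j\neq i}\Big(1-\frac{d_j}{d_j^{\max}}\Big)\ell_j^2 .$$ A Nash equilibrium is a profile $(d_i^* )$ with $d_i^*\in[0,d_i^{\max}]$ and $U_i(d_i^*,\boldsymbol{d_{-i}^*})\ge U_i(d_i,\boldsymbol{d_{-i}^*})$ for all $i$ and all $d_i\in[0,d_i^{\max}]$. *)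

theory Defs
  imports Complex_Main
begin

text \<open>Users are indexed by 0..<n (n = I). A strategy profile is d :: nat => real;
  only the values at indices < n matter.\<close>

definition valid_params ::
  "nat \<Rightarrow> (nat \<Rightarrow> real) \<Rightarrow> (nat \<Rightarrow> real) \<Rightarrow> (nat \<Rightarrow> real) \<Rightarrow> (nat \<Rightarrow> real) \<Rightarrow> (nat \<Rightarrow> real) \<Rightarrow> bool"
  where "valid_params n dmax eps xi ell theta \<longleftrightarrow>
    (\<forall>i<n. dmax i > 0 \<and> eps i > 0 \<and> xi i > 0 \<and> ell i > 0 \<and> theta i \<ge> 0)"

definition payoff ::
  "nat \<Rightarrow> (nat \<Rightarrow> real) \<Rightarrow> (nat \<Rightarrow> real) \<Rightarrow> (nat \<Rightarrow> real) \<Rightarrow> (nat \<Rightarrow> real) \<Rightarrow> (nat \<Rightarrow> real)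
   \<Rightarrow> nat \<Rightarrow> (nat \<Rightarrow> real) \<Rightarrow> real"
  where "payoff n dmax eps xi ell theta i d =
    ln ((\<Sum>j<n. d j) + eps i) - xi i * d i * ell i
    - theta i * d i * (\<Sum>j\<in>{..<n} - {i}. (1 - d j / dmax j) * (ell j)\<^sup>2)"

definition nash_eq ::
  "nat \<Rightarrow> (nat \<Rightarrow> real) \<Rightarrow> (nat \<Rightarrow> real) \<Rightarrow> (nat \<Rightarrow> real) \<Rightarrow> (nat \<Rightarrow> real) \<Rightarrow> (nat \<Rightarrow> real)
   \<Rightarrow> (nat \<Rightarrow> real) \<Rightarrow> bool"
  where "nash_eq n dmax eps xi ell theta d \<longleftrightarrow>
    (\<forall>i<n. d i \<in> {0..dmax i}) \<and>
    (\<forall>i<n. \<forall>x\<in>{0..dmax i}.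
        payoff n dmax eps xi ell theta i d \<ge> payoff n dmax eps xi ell theta i (d(i := x)))"

end

theory Submission
  imports Defs "HOL-Analysis.Brouwer_Fixpoint"
begin

text \<open>As a function of her own revocation \<open>x\<close>, the payoff of user \<open>i\<close> is
  \<open>ln (A + x) - c * x\<close>, where \<open>A > 0\<close> and \<open>c > 0\<close> depend only on the other users.
  Her best response is therefore \<open>1 / c - A\<close> clamped to \<open>[0, dmax i]\<close>, a continuous
  function of the others' strategies, and a fixed point of the best-response map on the box
  \<open>\<Prod>i. [0, dmax i]\<close> is a Nash equilibrium. Brouwer's theorem provides such a fixed point;
  since the number of users is a term and not a type, the library version for Euclidean types
  does not apply, and the fixed point is obtained from Kuhn's combinatorial lemma on grids in
  \<open>nat \<Rightarrow> real\<close> by a compactness argument. For non-uniqueness, revoking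
  lowers the other users' marginal cost, so when the privacy weight \<open>theta\<close> dominates,
  two users coordinate: both revoking nothing and both revoking everything are equilibria.\<close>

definition coord_box :: "nat \<Rightarrow> (nat \<Rightarrow> real) \<Rightarrow> (nat \<Rightarrow> real) \<Rightarrow> (nat \<Rightarrow> real) set" where
  "coord_box n a b = {x. \<forall>j<n. a j \<le> x j \<and> x j \<le> b j}"

abbreviation unit_cube :: "nat \<Rightarrow> (nat \<Rightarrow> real) set" where
  "unit_cube n \<equiv> coord_box n (\<lambda>_. 0) (\<lambda>_. 1)"

definition coord_cball :: "nat \<Rightarrow> (nat \<Rightarrow> real) \<Rightarrow> real \<Rightarrow> (nat \<Rightarrow> real) set" where
  "coord_cball n z r = {u. \<forall>j<n. \<bar>u j - z j\<bar> \<le> r}"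

definition coordwise_seq_continuous_on ::
  "nat \<Rightarrow> (nat \<Rightarrow> real) set \<Rightarrow> ((nat \<Rightarrow> real) \<Rightarrow> nat \<Rightarrow> real) \<Rightarrow> bool" where
  "coordwise_seq_continuous_on n S f \<longleftrightarrow>
    (\<forall>x z. (\<forall>k. x k \<in> S) \<longrightarrow> z \<in> S \<longrightarrow> (\<forall>j<n. (\<lambda>k. x k j) \<longlonglongrightarrow> z j) \<longrightarrow>
       (\<forall>i<n. (\<lambda>k. f (x k) i) \<longlonglongrightarrow> f z i))"

lemma mem_coord_box [simp]: "x \<in> coord_box n a b \<longleftrightarrow> (\<forall>j<n. a j \<le> x j \<and> x j \<le> b j)"
  by (simp add: coord_box_def)

lemma mem_coord_cball [simp]: "u \<in> coord_cball n z r \<longleftrightarrow> (\<forall>j<n. \<bar>u j - z j\<bar> \<le> r)"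
  by (simp add: coord_cball_def)

lemma coord_box_closed_seq:
  assumes "\<And>k. X k \<in> coord_box n a b" and "\<And>j. j < n \<Longrightarrow> (\<lambda>k. X k j) \<longlonglongrightarrow> z j"
  shows "z \<in> coord_box n a b"
  unfolding mem_coord_box
proof (intro allI impI conjI)
  fix j assume "j < n"
  then show "a j \<le> z j" "z j \<le> b j"
    using assms by (auto intro: LIMSEQ_le_const[of "\<lambda>k. X k j"] LIMSEQ_le_const2[of "\<lambda>k. X k j"])
qed

lemma coordwise_convergent_subseq:
  fixes X :: "nat \<Rightarrow> nat \<Rightarrow> real"
  assumes "\<And>j. j < n \<Longrightarrow> Bseq (\<lambda>k. X k j)"
  shows "\<exists>\<sigma>. strict_mono \<sigma> \<and> (\<forall>j<n. convergent (\<lambda>k. X (\<sigma> k) j))"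
  using assms
proof (induction n)
  case 0
  show ?case by (auto intro: strict_mono_id)
next
  case (Suc n)
  then obtain \<sigma> where \<sigma>: "strict_mono \<sigma>" "\<forall>j<n. convergent (\<lambda>k. X (\<sigma> k) j)"
    by auto
  obtain \<tau> where \<tau>: "strict_mono \<tau>" "monoseq (\<lambda>k. X (\<sigma> (\<tau> k)) n)"
    using seq_monosub[of "\<lambda>k. X (\<sigma> k) n"] by (auto simp: o_def)
  have "Bseq (\<lambda>k. X (\<sigma> (\<tau> k)) n)"
    using Bseq_subseq[OF Suc.prems[of n], of "\<sigma> \<circ> \<tau>"] by (simp add: o_def)
  with \<tau>(2) have "convergent (\<lambda>k. X (\<sigma> (\<tau> k)) n)"
    using Bseq_monoseq_convergent by blast
  moreover have "convergent (\<lambda>k. X (\<sigma> (\<tau> k)) j)" if "j < n" for j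
    using convergent_subseq_convergent[OF \<sigma>(2)[rule_format, OF that] \<tau>(1)] by (simp add: o_def)
  ultimately show ?case
    using strict_mono_o[OF \<sigma>(1) \<tau>(1)] less_Suc_eq by (auto intro!: exI[of _ "\<sigma> \<circ> \<tau>"])
qed

lemma unit_cube_approx_fixed_point:
  assumes f: "f ` unit_cube n \<subseteq> unit_cube n" and p: "0 < p"
  shows "\<exists>z\<in>unit_cube n. \<forall>i<n.
           (\<exists>u\<in>unit_cube n \<inter> coord_cball n z (1 / real p). u i \<le> f u i) \<and>
           (\<exists>v\<in>unit_cube n \<inter> coord_cball n z (1 / real p). f v i \<le> v i)"
proof -
  define g where "g y = (\<lambda>j. real (y j) / real p)" for y :: "nat \<Rightarrow> nat"
  \<comment> \<open>Label 1 where \<open>f\<close> moves coordinate \<open>i\<close> down (or on the top face): Kuhn's lemma yields a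
    grid cell of side \<open>1 / p\<close> showing both labels in every coordinate.\<close>
  define label where "label y i = (if g y i = 1 \<or> f (g y) i < g y i then 1 else 0 :: nat)" for y i
  have g_cube: "g y \<in> unit_cube n" if "\<forall>j<n. y j \<le> p" for y
    using that p by (auto simp: g_def divide_le_eq_1)
  have f_bound: "0 \<le> f (g y) i \<and> f (g y) i \<le> 1" if "\<forall>j<n. y j \<le> p" "i < n" for y i
  proof -
    have "f (g y) \<in> unit_cube n" using f g_cube[OF that(1)] by blast
    then show ?thesis using that(2) by simp
  qed
  obtain q where q: "\<forall>i<n. q i < p"
    and q_cell: "\<forall>i<n. \<exists>r s. (\<forall>j<n. q j \<le> r j \<and> r j \<le> q j + 1) \<and>
                     (\<forall>j<n. q j \<le> s j \<and> s j \<le> q j + 1) \<and> label r i \<noteq> label s i"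
  proof (rule kuhn_lemma[OF p])
    show "\<forall>y. (\<forall>j<n. y j \<le> p) \<longrightarrow> (\<forall>i<n. label y i = 0 \<or> label y i = 1)"
      by (simp add: label_def)
    show "\<forall>y. (\<forall>j<n. y j \<le> p) \<longrightarrow> (\<forall>i<n. y i = 0 \<longrightarrow> label y i = 0)"
    proof (intro allI impI)
      fix y i assume "\<forall>j<n. y j \<le> p" "i < n" "y i = 0"
      then show "label y i = 0" using f_bound[of y i] by (simp add: label_def g_def)
    qed
    show "\<forall>y. (\<forall>j<n. y j \<le> p) \<longrightarrow> (\<forall>i<n. y i = p \<longrightarrow> label y i = 1)"
      using p by (simp add: label_def g_def)
  qed
  have cell_le: "\<forall>j<n. r j \<le> p" if "\<forall>j<n. q j \<le> r j \<and> r j \<le> q j + 1" for r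
    using that q by (metis Suc_eq_plus1 Suc_leI le_trans)
  have cell_cube: "g r \<in> unit_cube n \<inter> coord_cball n (g q) (1 / real p)"
    if "\<forall>j<n. q j \<le> r j \<and> r j \<le> q j + 1" for r
  proof -
    have "\<bar>g r j - g q j\<bar> \<le> 1 / real p" if "q j \<le> r j" "r j \<le> q j + 1" for j
      using that p by (auto simp: g_def abs_le_iff diff_divide_distrib [symmetric] divide_right_mono)
    then show ?thesis using g_cube[OF cell_le[OF that]] that by auto
  qed
  have label0: "g y i \<le> f (g y) i" if "label y i = 0" for y i
    using that by (auto simp: label_def split: if_splits)
  have label1: "f (g y) i \<le> g y i" if "label y i \<noteq> 0" "\<forall>j<n. y j \<le> p" "i < n" for y i
    using that f_bound[OF that(2,3)] by (auto simp: label_def split: if_splits)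
  show ?thesis
  proof (intro bexI[of _ "g q"] allI impI)
    show "g q \<in> unit_cube n" using g_cube q by (simp add: less_imp_le)
    fix i assume i: "i < n"
    obtain r s where r: "\<forall>j<n. q j \<le> r j \<and> r j \<le> q j + 1" and s: "\<forall>j<n. q j \<le> s j \<and> s j \<le> q j + 1"
      and rs: "label r i \<noteq> label s i"
      using q_cell i by blast
    have r_le: "\<forall>j<n. r j \<le> p" and s_le: "\<forall>j<n. s j \<le> p"
      using cell_le r s by blast+
    show "(\<exists>u\<in>unit_cube n \<inter> coord_cball n (g q) (1 / real p). u i \<le> f u i) \<and>
          (\<exists>v\<in>unit_cube n \<inter> coord_cball n (g q) (1 / real p). f v i \<le> v i)"
    proof (cases "label r i = 0")
      case True
      then have "g r i \<le> f (g r) i" "f (g s) i \<le> g s i"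
        using rs label0 label1[OF _ s_le i] by auto
      then show ?thesis using cell_cube[OF r] cell_cube[OF s] by blast
    next
      case False
      then have "label s i = 0" using rs by (simp add: label_def split: if_splits)
      then have "g s i \<le> f (g s) i" "f (g r) i \<le> g r i"
        using label0 label1[OF False r_le i] by auto
      then show ?thesis using cell_cube[OF r] cell_cube[OF s] by blast
    qed
  qed
qed

lemma unit_cube_fixed_point:
  assumes f: "f ` unit_cube n \<subseteq> unit_cube n"
    and cont: "coordwise_seq_continuous_on n (unit_cube n) f"
  shows "\<exists>z\<in>unit_cube n. \<forall>i<n. f z i = z i"
proof -
  define N where "N k z = unit_cube n \<inter> coord_cball n z (1 / real (Suc k))" for k z
  have "\<forall>k. \<exists>z\<in>unit_cube n. \<forall>i<n. (\<exists>u\<in>N k z. u i \<le> f u i) \<and> (\<exists>v\<in>N k z. f v i \<le> v i)"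
    unfolding N_def using unit_cube_approx_fixed_point[OF f] by blast
  then obtain Z where Z: "\<And>k. Z k \<in> unit_cube n"
    and ZUV: "\<And>k i. i < n \<Longrightarrow> (\<exists>u\<in>N k (Z k). u i \<le> f u i) \<and> (\<exists>v\<in>N k (Z k). f v i \<le> v i)"
    by metis
  have "\<forall>k i. \<exists>u. i < n \<longrightarrow> u \<in> N k (Z k) \<and> u i \<le> f u i"
    using ZUV by blast
  then obtain U where U: "\<And>k i. i < n \<Longrightarrow> U k i \<in> N k (Z k) \<and> U k i i \<le> f (U k i) i"
    by metis
  have "\<forall>k i. \<exists>v. i < n \<longrightarrow> v \<in> N k (Z k) \<and> f v i \<le> v i"
    using ZUV by blast
  then obtain V where V: "\<And>k i. i < n \<Longrightarrow> V k i \<in> N k (Z k) \<and> f (V k i) i \<le> V k i i"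
    by metis
  have "Bseq (\<lambda>k. Z k j)" if "j < n" for j
    using Z that by (intro BseqI'[of _ 1]) auto
  then obtain \<sigma> where \<sigma>: "strict_mono \<sigma>" "\<forall>j<n. convergent (\<lambda>k. Z (\<sigma> k) j)"
    using coordwise_convergent_subseq by blast
  define z where "z j = lim (\<lambda>k. Z (\<sigma> k) j)" for j
  have Z_lim: "(\<lambda>k. Z (\<sigma> k) j) \<longlonglongrightarrow> z j" if "j < n" for j
    using \<sigma>(2) that by (simp add: z_def convergent_LIMSEQ_iff)
  have z: "z \<in> unit_cube n"
    by (rule coord_box_closed_seq[OF Z Z_lim])
  have radius_lim: "(\<lambda>k. 1 / real (Suc (\<sigma> k))) \<longlonglongrightarrow> 0"
    using LIMSEQ_subseq_LIMSEQ[OF LIMSEQ_inverse_real_of_nat \<sigma>(1)] by (simp add: o_def inverse_eq_divide)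
  have near_lim: "(\<lambda>k. W k j) \<longlonglongrightarrow> z j"
    if W: "\<And>k. W k \<in> N (\<sigma> k) (Z (\<sigma> k))" and j: "j < n" for W j
  proof -
    have "(\<lambda>k. W k j - Z (\<sigma> k) j) \<longlonglongrightarrow> 0"
      by (rule Lim_null_comparison[OF _ radius_lim]) (use W j in \<open>auto simp: N_def\<close>)
    from tendsto_add[OF this Z_lim[OF j]] show ?thesis by simp
  qed
  have near_f_lim: "(\<lambda>k. f (W k) i) \<longlonglongrightarrow> f z i"
    if W: "\<And>k. W k \<in> N (\<sigma> k) (Z (\<sigma> k))" and i: "i < n" for W i
    using cont z near_lim[OF W] W i unfolding coordwise_seq_continuous_on_def N_def by blast
  have "f z i = z i" if i: "i < n" for i
  proof (rule antisym)
    show "z i \<le> f z i"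
      using U i by (intro LIMSEQ_le[OF near_lim near_f_lim, of "\<lambda>k. U (\<sigma> k) i"]) auto
    show "f z i \<le> z i"
      using V i by (intro LIMSEQ_le[OF near_f_lim near_lim, of "\<lambda>k. V (\<sigma> k) i"]) auto
  qed
  with z show ?thesis by blast
qed

lemma coord_box_fixed_point:
  assumes ab: "\<And>j. j < n \<Longrightarrow> a j < b j"
    and f: "f ` coord_box n a b \<subseteq> coord_box n a b"
    and cont: "coordwise_seq_continuous_on n (coord_box n a b) f"
  shows "\<exists>z\<in>coord_box n a b. \<forall>i<n. f z i = z i"
proof -
  define h where "h y = (\<lambda>j. a j + (b j - a j) * y j)" for y
  define g where "g y = (\<lambda>i. (f (h y) i - a i) / (b i - a i))" for y
  have h: "h y \<in> coord_box n a b" if "y \<in> unit_cube n" for y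
  proof -
    have "a j \<le> h y j \<and> h y j \<le> b j" if "j < n" for j
    proof -
      have "0 \<le> (b j - a j) * y j" "(b j - a j) * y j \<le> b j - a j"
        using that \<open>y \<in> unit_cube n\<close> ab[OF that] by (simp_all add: mult_left_le)
      then show ?thesis unfolding h_def by linarith
    qed
    then show ?thesis by simp
  qed
  have "g y \<in> unit_cube n" if "y \<in> unit_cube n" for y
  proof -
    have "f (h y) \<in> coord_box n a b" using f h[OF that] by blast
    then show ?thesis using ab by (auto simp: g_def divide_le_eq_1)
  qed
  then have g_cube: "g ` unit_cube n \<subseteq> unit_cube n" by blast
  have "coordwise_seq_continuous_on n (unit_cube n) g"
    unfolding coordwise_seq_continuous_on_def
  proof (intro allI impI)
    fix x z i
    assume x: "\<forall>k. x k \<in> unit_cube n" and z: "z \<in> unit_cube n"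
      and lim: "\<forall>j<n. (\<lambda>k. x k j) \<longlonglongrightarrow> z j" and i: "i < n"
    have "\<forall>j<n. (\<lambda>k. h (x k) j) \<longlonglongrightarrow> h z j"
      using lim by (auto simp: h_def intro!: tendsto_intros)
    then have "(\<lambda>k. f (h (x k)) i) \<longlonglongrightarrow> f (h z) i"
      using cont[unfolded coordwise_seq_continuous_on_def, rule_format, of "\<lambda>k. h (x k)" "h z"]
        h x z i by blast
    then show "(\<lambda>k. g (x k) i) \<longlonglongrightarrow> g z i"
      unfolding g_def using ab[OF i] by (intro tendsto_intros) auto
  qed
  then obtain y where y: "y \<in> unit_cube n" and fix_y: "\<forall>i<n. g y i = y i"
    using unit_cube_fixed_point[OF g_cube] by blast
  have "f (h y) i = h y i" if "i < n" for i
  proof -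
    have "(f (h y) i - a i) / (b i - a i) = y i" using fix_y that by (simp add: g_def)
    then show ?thesis using ab[OF that] by (simp add: h_def field_simps)
  qed
  with h[OF y] show ?thesis by blast
qed

definition others_total :: "nat \<Rightarrow> nat \<Rightarrow> (nat \<Rightarrow> real) \<Rightarrow> real" where
  "others_total n i d = (\<Sum>j\<in>{..<n} - {i}. d j)"

definition marginal_cost ::
  "nat \<Rightarrow> (nat \<Rightarrow> real) \<Rightarrow> (nat \<Rightarrow> real) \<Rightarrow> (nat \<Rightarrow> real) \<Rightarrow> (nat \<Rightarrow> real) \<Rightarrow> nat \<Rightarrow> (nat \<Rightarrow> real) \<Rightarrow> real"
  where "marginal_cost n dmax xi ell theta i d =
    xi i * ell i + theta i * (\<Sum>j\<in>{..<n} - {i}. (1 - d j / dmax j) * (ell j)\<^sup>2)"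

definition best_response ::
  "nat \<Rightarrow> (nat \<Rightarrow> real) \<Rightarrow> (nat \<Rightarrow> real) \<Rightarrow> (nat \<Rightarrow> real) \<Rightarrow> (nat \<Rightarrow> real) \<Rightarrow> (nat \<Rightarrow> real)
   \<Rightarrow> nat \<Rightarrow> (nat \<Rightarrow> real) \<Rightarrow> real"
  where "best_response n dmax eps xi ell theta i d =
    max 0 (min (dmax i) (1 / marginal_cost n dmax xi ell theta i d - (others_total n i d + eps i)))"

lemma ln_add_minus_linear_le_clamped:
  fixes A c M x :: real
  assumes A: "0 < A" and c: "0 < c" and x: "0 \<le> x" "x \<le> M"
  defines "b \<equiv> max 0 (min M (1 / c - A))"
  shows "ln (A + x) - c * x \<le> ln (A + b) - c * b"
proof -
  have b: "0 \<le> b" "b \<le> M" using x by (auto simp: b_def)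
  have pos: "0 < A + b" "0 < A + x" using A b x by auto
  have tangent: "ln (A + x) \<le> ln (A + b) + (x - b) / (A + b)"
  proof -
    have "ln ((A + x) / (A + b)) \<le> (A + x) / (A + b) - 1"
      using pos by (intro ln_le_minus_one) simp
    moreover have "(A + x) / (A + b) - 1 = (x - b) / (A + b)"
      using pos by (simp add: field_simps)
    ultimately show ?thesis using pos by (simp add: ln_div)
  qed
  have "(x - b) * (1 / (A + b) - c) \<le> 0"
  proof (cases "1 / c - A \<le> 0")
    case True
    then have "b = 0" using x by (simp add: b_def)
    moreover have "1 / A \<le> c" using True A c by (simp add: field_simps)
    ultimately show ?thesis using x by (simp add: mult_nonneg_nonpos)
  next
    case False
    show ?thesis
    proof (cases "M \<le> 1 / c - A")
      case True
      then have "b = M" "c \<le> 1 / (A + M)" using x c pos by (auto simp: b_def field_simps)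
      then show ?thesis using x by (simp add: mult_nonpos_nonneg)
    next
      case False
      with \<open>\<not> 1 / c - A \<le> 0\<close> have "b = 1 / c - A" by (simp add: b_def)
      then show ?thesis using c by simp
    qed
  qed
  with tangent show ?thesis by (simp add: algebra_simps)
qed

lemma payoff_fun_upd:
  assumes "i < n"
  shows "payoff n dmax eps xi ell theta i (d(i := x)) =
    ln (others_total n i d + eps i + x) - marginal_cost n dmax xi ell theta i d * x"
proof -
  have "(\<Sum>j<n. (d(i := x)) j) = x + (\<Sum>j\<in>{..<n} - {i}. (d(i := x)) j)"
    using sum.remove[of "{..<n}" i "d(i := x)"] assms by simp
  also have "(\<Sum>j\<in>{..<n} - {i}. (d(i := x)) j) = others_total n i d"
    unfolding others_total_def by (rule sum.cong) auto
  finally have total: "(\<Sum>j<n. (d(i := x)) j) = x + others_total n i d" .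
  have "(\<Sum>j\<in>{..<n} - {i}. (1 - (d(i := x)) j / dmax j) * (ell j)\<^sup>2)
      = (\<Sum>j\<in>{..<n} - {i}. (1 - d j / dmax j) * (ell j)\<^sup>2)"
    by (rule sum.cong) auto
  with total show ?thesis
    by (simp add: payoff_def marginal_cost_def algebra_simps)
qed

lemma marginal_cost_pos:
  assumes "valid_params n dmax eps xi ell theta" and "d \<in> coord_box n (\<lambda>_. 0) dmax" and "i < n"
  shows "0 < marginal_cost n dmax xi ell theta i d"
proof -
  have "0 \<le> (1 - d j / dmax j) * (ell j)\<^sup>2" if "j < n" for j
    using assms that by (simp add: valid_params_def divide_le_eq_1)
  then have "0 \<le> (\<Sum>j\<in>{..<n} - {i}. (1 - d j / dmax j) * (ell j)\<^sup>2)"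
    by (intro sum_nonneg) auto
  with assms show ?thesis
    by (simp add: marginal_cost_def valid_params_def add_pos_nonneg)
qed

lemma others_total_nonneg:
  assumes "d \<in> coord_box n (\<lambda>_. 0) b"
  shows "0 \<le> others_total n i d"
  using assms unfolding others_total_def by (intro sum_nonneg) auto

lemma nash_eq_if_best_response_fixed_point:
  assumes vp: "valid_params n dmax eps xi ell theta"
    and d: "d \<in> coord_box n (\<lambda>_. 0) dmax"
    and fixed: "\<And>i. i < n \<Longrightarrow> best_response n dmax eps xi ell theta i d = d i"
  shows "nash_eq n dmax eps xi ell theta d"
  unfolding nash_eq_def
proof (intro conjI allI impI ballI)
  fix i assume i: "i < n"
  then show "d i \<in> {0..dmax i}" using d by simp
  fix x assume x: "x \<in> {0..dmax i}"
  have "0 < others_total n i d + eps i"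
    using others_total_nonneg[OF d] vp i by (simp add: valid_params_def add_nonneg_pos)
  from ln_add_minus_linear_le_clamped[OF this marginal_cost_pos[OF vp d i], of x "dmax i"] x
  have "payoff n dmax eps xi ell theta i (d(i := x)) \<le> payoff n dmax eps xi ell theta i (d(i := d i))"
    using fixed[OF i] unfolding payoff_fun_upd[OF i] best_response_def by simp
  then show "payoff n dmax eps xi ell theta i (d(i := x)) \<le> payoff n dmax eps xi ell theta i d"
    by simp
qed

lemma best_response_bounds:
  assumes "0 \<le> dmax i"
  shows "0 \<le> best_response n dmax eps xi ell theta i d \<and> best_response n dmax eps xi ell theta i d \<le> dmax i"
  using assms by (simp add: best_response_def)

lemma best_response_coordwise_continuous:
  assumes vp: "valid_params n dmax eps xi ell theta"
  shows "coordwise_seq_continuous_on n (coord_box n (\<lambda>_. 0) dmax)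
           (\<lambda>d i. best_response n dmax eps xi ell theta i d)"
  unfolding coordwise_seq_continuous_on_def
proof (intro allI impI)
  fix x z i
  assume z: "z \<in> coord_box n (\<lambda>_. 0) dmax"
    and lim: "\<forall>j<n. (\<lambda>k. x k j) \<longlonglongrightarrow> z j" and i: "i < n"
  have "(\<lambda>k. others_total n i (x k)) \<longlonglongrightarrow> others_total n i z"
    unfolding others_total_def using lim by (intro tendsto_sum) auto
  moreover have "(\<lambda>k. marginal_cost n dmax xi ell theta i (x k)) \<longlonglongrightarrow> marginal_cost n dmax xi ell theta i z"
    unfolding marginal_cost_def using lim vp by (intro tendsto_intros) (auto simp: valid_params_def)
  ultimately show "(\<lambda>k. best_response n dmax eps xi ell theta i (x k)) \<longlonglongrightarrow> best_response n dmax eps xi ell theta i z"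
    unfolding best_response_def using marginal_cost_pos[OF vp z i] by (intro tendsto_intros) auto
qed

lemma nash_eq_exists:
  assumes vp: "valid_params n dmax eps xi ell theta"
  shows "\<exists>d. nash_eq n dmax eps xi ell theta d"
proof -
  let ?box = "coord_box n (\<lambda>_. 0) dmax" and ?br = "\<lambda>d i. best_response n dmax eps xi ell theta i d"
  have dmax: "0 < dmax i" if "i < n" for i
    using vp that by (simp add: valid_params_def)
  have "\<forall>i<n. 0 \<le> ?br d i \<and> ?br d i \<le> dmax i" for d
    using best_response_bounds dmax less_imp_le by blast
  then have "?br ` ?box \<subseteq> ?box" by auto
  then obtain d where "d \<in> ?box" "\<forall>i<n. ?br d i = d i"
    using coord_box_fixed_point[OF dmax _ best_response_coordwise_continuous[OF vp]] by blast
  then show ?thesis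
    using nash_eq_if_best_response_fixed_point[OF vp] by blast
qed

abbreviation (input) example_nash_eq :: "(nat \<Rightarrow> real) \<Rightarrow> bool" where
  "example_nash_eq \<equiv> nash_eq 2 (\<lambda>_. 1) (\<lambda>_. 1) (\<lambda>_. 1 / 10) (\<lambda>_. 1) (\<lambda>_. 1)"

lemma example_params_valid: "valid_params 2 (\<lambda>_. 1) (\<lambda>_. 1) (\<lambda>_. 1 / 10) (\<lambda>_. 1) (\<lambda>_. 1)"
  by (simp add: valid_params_def)

lemma example_nash_eq_no_revocation: "example_nash_eq (\<lambda>_. 0)"
proof (rule nash_eq_if_best_response_fixed_point[OF example_params_valid])
  fix i :: nat assume "i < 2"
  then have "{..<2} - {i} = {1 - i}" by (auto simp: less_2_cases_iff)
  then show "best_response 2 (\<lambda>_. 1) (\<lambda>_. 1) (\<lambda>_. 1 / 10) (\<lambda>_. 1) (\<lambda>_. 1) i (\<lambda>_. 0) = 0"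
    by (simp add: best_response_def marginal_cost_def others_total_def)
qed simp

lemma example_nash_eq_full_revocation: "example_nash_eq (\<lambda>_. 1)"
proof (rule nash_eq_if_best_response_fixed_point[OF example_params_valid])
  fix i :: nat assume "i < 2"
  then have "{..<2} - {i} = {1 - i}" by (auto simp: less_2_cases_iff)
  then show "best_response 2 (\<lambda>_. 1) (\<lambda>_. 1) (\<lambda>_. 1 / 10) (\<lambda>_. 1) (\<lambda>_. 1) i (\<lambda>_. 1) = 1"
    by (simp add: best_response_def marginal_cost_def others_total_def)
qed simp

theorem lemma2:
  shows "(\<forall>n dmax eps xi ell theta. n \<ge> 2 \<and> valid_params n dmax eps xi ell theta \<longrightarrow>
            (\<exists>d. nash_eq n dmax eps xi ell theta d))
       \<and> (\<exists>n dmax eps xi ell theta. n \<ge> 2 \<and> valid_params n dmax eps xi ell theta \<and>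
            (\<exists>d d'. nash_eq n dmax eps xi ell theta d \<and> nash_eq n dmax eps xi ell theta d' \<and>
                    (\<exists>i<n. d i \<noteq> d' i)))"
proof
  show "\<forall>n dmax eps xi ell theta. n \<ge> 2 \<and> valid_params n dmax eps xi ell theta \<longrightarrow>
          (\<exists>d. nash_eq n dmax eps xi ell theta d)"
    using nash_eq_exists by blast
  show "\<exists>n dmax eps xi ell theta. n \<ge> 2 \<and> valid_params n dmax eps xi ell theta \<and>
          (\<exists>d d'. nash_eq n dmax eps xi ell theta d \<and> nash_eq n dmax eps xi ell theta d' \<and>
                  (\<exists>i<n. d i \<noteq> d' i))"
  proof (intro exI conjI)
    show "example_nash_eq (\<lambda>_. 0)"
      by (rule example_nash_eq_no_revocation)
    show "example_nash_eq (\<lambda>_. 1)"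
      by (rule example_nash_eq_full_revocation)
    show "0 < (2::nat)" by simp
  qed (use example_params_valid in auto)
qed

end
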